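(* Let $k$ be a difference field of characteristic $0$ and $R=k\{y_1,\ldots,y_n\}$. Any strictly ascending chain $I_1\subsetneq I_2\subsetneq\cdots$ of well-mixed $\sigma$-ideals of $R$, each of which is generated by monomials (i.e. each $I_j$ is the well-mixed closure $\langle F_j\rangle$ of some set $F_j$ of monomials), is finite.
   Context: A difference field is a field $k$ with a ring endomorphism $\sigma$. $R=k\{y_1,\ldots,y_n\}$ is the polynomial ring over $k$ in the variables $\sigma^j(y_i)$ ($1\le i\le n$, $j\ge0$) with $\sigma$ extended naturally. For $p=\sum c_ix^i\in\mathbb{N}[x]$ and $a\in R$, $a^p=\prod_i(\sigma^i(a))^{c_i}$; for $\mathbf{u}\in\mathbb{N}[x]^n$ a monomial is $\mathbf{y}^{\mathbf{u}}=y_1^{u_1}\cdots y_n^{u_n}$. A $\sigma$-ideal is an ideal stable under $\sigma$; it is well-mixed if $ab\in I$ implies $a\sigma(b)\in I$. $\langle F\rangle$ is the smallest well-mixed $\sigma$-ideal containing $F$. *)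

theory Defs
  imports "HOL-Library.Poly_Mapping"
begin

text \<open>The difference polynomial ring R = k{y_1,...,y_n}: polynomials over k in the
variables sigma^j(y_i), represented as the variable (i, j) with i ranging over a finite
index type 'i (so n = CARD('i)) and j :: nat.  A monomial (exponent vector) is a
finitely supported map from variables to nat; a polynomial is a finitely
supported map from monomials to coefficients.\<close>

type_synonym ('i, 'k) dpoly = "(('i \<times> nat) \<Rightarrow>\<^sub>0 nat) \<Rightarrow>\<^sub>0 'k"

definition ring_endo :: "('k::field \<Rightarrow> 'k) \<Rightarrow> bool" where
  "ring_endo s \<longleftrightarrow> (\<forall>a b. s (a + b) = s a + s b) \<and> (\<forall>a b. s (a * b) = s a * s b) \<and> s 1 = 1"

definition shift_mon :: "(('i \<times> nat) \<Rightarrow>\<^sub>0 nat) \<Rightarrow> (('i \<times> nat) \<Rightarrow>\<^sub>0 nat)" where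
  "shift_mon m = (\<Sum>v\<in>Poly_Mapping.keys m. Poly_Mapping.single (fst v, Suc (snd v)) (Poly_Mapping.lookup m v))"

definition dsigma :: "('k::field \<Rightarrow> 'k) \<Rightarrow> ('i, 'k) dpoly \<Rightarrow> ('i, 'k) dpoly" where
  "dsigma s p = (\<Sum>m\<in>Poly_Mapping.keys p. Poly_Mapping.single (shift_mon m) (s (Poly_Mapping.lookup p m)))"

definition is_ideal :: "('i, 'k::field) dpoly set \<Rightarrow> bool" where
  "is_ideal I \<longleftrightarrow> 0 \<in> I \<and> (\<forall>a\<in>I. \<forall>b\<in>I. a + b \<in> I) \<and> (\<forall>a\<in>I. \<forall>r. r * a \<in> I)"

definition sigma_ideal :: "('k::field \<Rightarrow> 'k) \<Rightarrow> ('i, 'k) dpoly set \<Rightarrow> bool" where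
  "sigma_ideal s I \<longleftrightarrow> is_ideal I \<and> (\<forall>a\<in>I. dsigma s a \<in> I)"

definition well_mixed :: "('k::field \<Rightarrow> 'k) \<Rightarrow> ('i, 'k) dpoly set \<Rightarrow> bool" where
  "well_mixed s I \<longleftrightarrow> (\<forall>a b. a * b \<in> I \<longrightarrow> a * dsigma s b \<in> I)"

definition wm_closure :: "('k::field \<Rightarrow> 'k) \<Rightarrow> ('i, 'k) dpoly set \<Rightarrow> ('i, 'k) dpoly set" where
  "wm_closure s F = \<Inter> {I. sigma_ideal s I \<and> well_mixed s I \<and> F \<subseteq> I}"

definition is_monomial :: "('i, 'k::field) dpoly \<Rightarrow> bool" where
  "is_monomial p \<longleftrightarrow> (\<exists>m. p = Poly_Mapping.single m 1)"

end

(* The exponents of the monomials in a well-mixed sigma-ideal form a set that is closed under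
   multiplication by arbitrary monomials and under replacing a factor sigma^j(y_i) by
   sigma^(j+1)(y_i) (well-mixedness applied to a * sigma^j(y_i)). Such a set is upward closed
   for the order comparing all tail degrees, the degree of a monomial in the variables
   sigma^j(y_i) with j >= d. For fixed i the tail degrees of a monomial form a Young diagram;
   Young diagrams under inclusion are well-quasi-ordered, and by Ramsey's theorem so are their
   finite products. A strictly ascending chain of monomially generated well-mixed sigma-ideals
   provides at each step j a generating monomial of I_(j+1) outside I_j, and these monomials
   would form a bad sequence for that order. *)

theory Submission
  imports Defs "HOL-Library.Ramsey"
begin

section \<open>Almost full relations\<close>

definition almost_full_on :: "('a \<Rightarrow> 'a \<Rightarrow> bool) \<Rightarrow> 'a set \<Rightarrow> bool" where
  "almost_full_on P A \<longleftrightarrow> (\<forall>f :: nat \<Rightarrow> 'a. (\<forall>k. f k \<in> A) \<longrightarrow> (\<exists>i j. i < j \<and> P (f i) (f j)))"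

lemma almost_full_onI:
  assumes "\<And>f :: nat \<Rightarrow> 'a. (\<And>k. f k \<in> A) \<Longrightarrow> \<exists>i j. i < j \<and> P (f i) (f j)"
  shows "almost_full_on P A"
  using assms unfolding almost_full_on_def by blast

lemma almost_full_onD:
  assumes "almost_full_on P A" "\<And>k :: nat. f k \<in> A"
  obtains i j where "i < j" "P (f i) (f j)"
  using assms unfolding almost_full_on_def by blast

lemma almost_full_on_imp_homogeneous_subseq:
  assumes "almost_full_on P A" "\<And>k :: nat. f k \<in> A"
  obtains g :: "nat \<Rightarrow> nat" where "strict_mono g" "\<And>i j. i < j \<Longrightarrow> P (f (g i)) (f (g j))"
proof -
  define col where "col X = (if P (f (Min X)) (f (Max X)) then 0 else 1::nat)" for X
  have "\<exists>Y t. Y \<subseteq> UNIV \<and> infinite Y \<and> t < 2 \<and> (\<forall>x\<in>Y. \<forall>y\<in>Y. x \<noteq> y \<longrightarrow> col {x, y} = t)"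
    by (rule Ramsey2) (auto simp: col_def)
  then obtain Y t where Y: "infinite Y" and hom: "\<forall>x\<in>Y. \<forall>y\<in>Y. x \<noteq> y \<longrightarrow> col {x, y} = t"
    by blast
  define g where "g = enumerate Y"
  have g: "strict_mono g"
    using Y by (simp add: g_def strict_mono_enumerate)
  have col_g: "col {g i, g j} = (if P (f (g i)) (f (g j)) then 0 else 1)" if "i < j" for i j
    using strict_monoD[OF g that] by (simp add: col_def min_def max_def)
  have g_in: "g i \<in> Y" for i
    using Y by (simp add: g_def enumerate_in_set)
  have hom_g: "col {g i, g j} = t" if "i < j" for i j
    using hom g_in strict_monoD[OF g that] by (metis less_irrefl)
  obtain i j where "i < j" "P (f (g i)) (f (g j))"
    using almost_full_onD[OF assms(1), of "f \<circ> g"] assms(2) by auto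
  then have "t = 0"
    using col_g hom_g by simp
  then have "P (f (g i)) (f (g j))" if "i < j" for i j
    using col_g[OF that] hom_g[OF that] by (simp split: if_splits)
  with g show thesis
    by (rule that)
qed

lemma homogeneous_subseq_fun:
  assumes "finite X" "almost_full_on P A" "\<And>k x. x \<in> X \<Longrightarrow> f k x \<in> A"
  shows "\<exists>g :: nat \<Rightarrow> nat. strict_mono g \<and> (\<forall>i j. i < j \<longrightarrow> (\<forall>x\<in>X. P (f (g i) x) (f (g j) x)))"
  using assms(1,3)
proof (induction X arbitrary: f rule: finite_induct)
  case empty
  show ?case
    by (rule exI[of _ id]) (simp add: strict_mono_def)
next
  case (insert x X)
  have "\<exists>g :: nat \<Rightarrow> nat. strict_mono g \<and> (\<forall>i j. i < j \<longrightarrow> (\<forall>y\<in>X. P (f (g i) y) (f (g j) y)))"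
    by (rule insert.IH) (simp add: insert.prems)
  then obtain g :: "nat \<Rightarrow> nat" where g: "strict_mono g"
    and g_hom: "\<forall>i j. i < j \<longrightarrow> (\<forall>y\<in>X. P (f (g i) y) (f (g j) y))"
    by blast
  have "f (g k) x \<in> A" for k
    using insert.prems by simp
  then obtain h :: "nat \<Rightarrow> nat" where h: "strict_mono h"
    and h_hom: "\<And>i j. i < j \<Longrightarrow> P (f (g (h i)) x) (f (g (h j)) x)"
    using almost_full_on_imp_homogeneous_subseq[OF assms(2), of "\<lambda>k. f (g k) x"] by blast
  have "strict_mono (g \<circ> h)"
    using g h by (simp add: strict_mono_def)
  moreover have "\<forall>y\<in>insert x X. P (f ((g \<circ> h) i) y) (f ((g \<circ> h) j) y)" if "i < j" for i j
    using h_hom[OF that] g_hom strict_monoD[OF h that] by simp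
  ultimately show ?case
    by blast
qed

lemma almost_full_on_fun:
  assumes "finite X" "almost_full_on P A"
  shows "almost_full_on (\<lambda>u v. \<forall>x\<in>X. P (u x) (v x)) {u. \<forall>x\<in>X. u x \<in> A}"
proof (rule almost_full_onI)
  fix f :: "nat \<Rightarrow> 'a \<Rightarrow> 'b"
  assume "\<And>k. f k \<in> {u. \<forall>x\<in>X. u x \<in> A}"
  then have "\<exists>g :: nat \<Rightarrow> nat. strict_mono g \<and> (\<forall>i j. i < j \<longrightarrow> (\<forall>x\<in>X. P (f (g i) x) (f (g j) x)))"
    by (intro homogeneous_subseq_fun[OF assms]) simp
  then obtain g :: "nat \<Rightarrow> nat" where "strict_mono g" "\<And>i j. i < j \<Longrightarrow> \<forall>x\<in>X. P (f (g i) x) (f (g j) x)"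
    by blast
  then show "\<exists>i j. i < j \<and> (\<forall>x\<in>X. P (f i x) (f j x))"
    by (metis lessI strict_monoD)
qed

lemma almost_full_on_wellorder: "almost_full_on (\<le>) (UNIV :: 'a::wellorder set)"
proof (rule almost_full_onI)
  fix f :: "nat \<Rightarrow> 'a"
  obtain i where "f i = (LEAST y. y \<in> range f)"
    by (metis (mono_tags) LeastI rangeE rangeI)
  then have "f i \<le> f (Suc i)"
    by (simp add: Least_le)
  then show "\<exists>i j. i < j \<and> f i \<le> f j"
    using lessI by blast
qed

section \<open>Young diagrams\<close>

definition young_diagrams :: "(nat \<Rightarrow> nat) set" where
  "young_diagrams = {T. antimono T \<and> (\<exists>L. \<forall>d\<ge>L. T d = 0)}"

lemma young_diagram_antimono:
  assumes "T \<in> young_diagrams" "d \<le> e"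
  shows "T e \<le> T d"
proof -
  from assms(1) have "antimono T"
    by (simp add: young_diagrams_def)
  then show ?thesis
    using assms(2) by (rule antimonoD)
qed

lemma young_diagram_below_if_not_ge:
  assumes "T0 \<in> young_diagrams" "T \<in> young_diagrams" "\<not> T0 \<le> T"
    and "\<And>d. L \<le> d \<Longrightarrow> T0 d = 0" "L \<le> e"
  shows "T e < T0 0"
proof -
  obtain d where d: "T d < T0 d"
    using assms(3) by (auto simp: le_fun_def not_le)
  then have "d < L"
    using assms(4) by (metis not_less not_less_zero)
  then have "T e \<le> T d"
    using assms(2,5) by (simp add: young_diagram_antimono)
  also note d
  also have "T0 d \<le> T0 0"
    using assms(1) by (simp add: young_diagram_antimono)
  finally show ?thesis .
qed

lemma card_young_row_ge:
  assumes T: "T \<in> young_diagrams" and "L \<le> d" "h < T d"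
  shows "Suc d - L \<le> card {e. L \<le> e \<and> h < T e}"
proof -
  obtain L0 where L0: "\<And>e. L0 \<le> e \<Longrightarrow> T e = 0"
    using T by (auto simp: young_diagrams_def)
  have "{e. L \<le> e \<and> h < T e} \<subseteq> {..<L0}"
  proof
    fix e
    assume "e \<in> {e. L \<le> e \<and> h < T e}"
    then have "T e \<noteq> 0"
      by simp
    then show "e \<in> {..<L0}"
      by (meson L0 lessThan_iff not_less)
  qed
  then have "finite {e. L \<le> e \<and> h < T e}"
    by (rule finite_subset) simp
  moreover have "{L..d} \<subseteq> {e. L \<le> e \<and> h < T e}"
  proof
    fix e
    assume e: "e \<in> {L..d}"
    then have "T d \<le> T e"
      using T by (simp add: young_diagram_antimono)
    with e \<open>h < T d\<close> show "e \<in> {e. L \<le> e \<and> h < T e}"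
      by simp
  qed
  ultimately show ?thesis
    by (metis card_atLeastAtMost card_mono)
qed

lemma card_young_row_le:
  assumes T: "T \<in> young_diagrams" and "T d \<le> h"
  shows "card {e. L \<le> e \<and> h < T e} \<le> d - L"
proof -
  have "{e. L \<le> e \<and> h < T e} \<subseteq> {L..<d}"
  proof
    fix e
    assume e: "e \<in> {e. L \<le> e \<and> h < T e}"
    have "\<not> d \<le> e"
    proof
      assume "d \<le> e"
      then have "T e \<le> T d"
        using T by (simp add: young_diagram_antimono)
      with e \<open>T d \<le> h\<close> show False
        by simp
    qed
    with e show "e \<in> {L..<d}"
      by simp
  qed
  then show ?thesis
    by (metis card_atLeastLessThan card_mono finite_atLeastLessThan)
qed

(* A Young diagram whose columns from L on are all shorter than a is encoded by its first L
   column heights, followed by the lengths (counted from column L) of its rows 0, ..., a - 1. *)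
definition young_code :: "nat \<Rightarrow> (nat \<Rightarrow> nat) \<Rightarrow> nat \<Rightarrow> nat" where
  "young_code L T c = (if c < L then T c else card {e. L \<le> e \<and> c - L < T e})"

lemma le_if_young_code_le:
  assumes T: "T \<in> young_diagrams" and T': "T' \<in> young_diagrams" and bound: "\<And>e. L \<le> e \<Longrightarrow> T e < a"
    and code: "\<And>c. c < L + a \<Longrightarrow> young_code L T c \<le> young_code L T' c"
  shows "T \<le> T'"
proof (rule le_funI, rule ccontr)
  fix d
  assume less: "\<not> T d \<le> T' d"
  show False
  proof (cases "d < L")
    case True
    then show False
      using code[of d] less by (simp add: young_code_def)
  next
    case False
    define h where "h = T d - 1"
    have h: "h < T d" "T' d \<le> h" "L + h < L + a"
      using less bound[of d] False by (auto simp: h_def)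
    have "Suc d - L \<le> card {e. L \<le> e \<and> h < T e}"
      using False h(1) by (intro card_young_row_ge[OF T]) simp_all
    also have "\<dots> \<le> card {e. L \<le> e \<and> h < T' e}"
      using code[OF h(3)] by (simp add: young_code_def)
    also have "\<dots> \<le> d - L"
      using h(2) by (rule card_young_row_le[OF T'])
    finally show False
      using False by simp
  qed
qed

(* In a bad sequence no later diagram contains the first one, so from some column L on all later
   diagrams are shorter than its first column, and young_code compares them as tuples. *)
lemma almost_full_on_young_diagrams: "almost_full_on (\<le>) young_diagrams"
proof (rule almost_full_onI)
  fix f :: "nat \<Rightarrow> nat \<Rightarrow> nat"
  assume f: "\<And>k. f k \<in> young_diagrams"
  show "\<exists>i j. i < j \<and> f i \<le> f j"
  proof (rule ccontr)
    assume bad: "\<not> (\<exists>i j. i < j \<and> f i \<le> f j)"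
    obtain L where L: "\<And>d. L \<le> d \<Longrightarrow> f 0 d = 0"
      using f[of 0] by (auto simp: young_diagrams_def)
    have below: "f (Suc k) e < f 0 0" if "L \<le> e" for k e
    proof -
      have "\<not> f 0 \<le> f (Suc k)"
        using bad zero_less_Suc by blast
      then show ?thesis
        using young_diagram_below_if_not_ge[OF f f _ L that] by blast
    qed
    have "almost_full_on (\<lambda>u v. \<forall>c\<in>{..<L + f 0 0}. u c \<le> v c)
        {u :: nat \<Rightarrow> nat. \<forall>c\<in>{..<L + f 0 0}. u c \<in> UNIV}"
      by (rule almost_full_on_fun) (simp_all add: almost_full_on_wellorder)
    then obtain i j where "i < j"
      and "\<forall>c\<in>{..<L + f 0 0}. young_code L (f (Suc i)) c \<le> young_code L (f (Suc j)) c"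
      by (rule almost_full_onD[where f = "\<lambda>k. young_code L (f (Suc k))"]) simp
    then have "f (Suc i) \<le> f (Suc j)"
      by (intro le_if_young_code_le[OF f f below]) auto
    then show False
      using bad \<open>i < j\<close> Suc_mono by blast
  qed
qed

section \<open>Tail degrees of monomials\<close>

definition tail_degree :: "('i \<times> nat \<Rightarrow>\<^sub>0 nat) \<Rightarrow> 'i \<Rightarrow> nat \<Rightarrow> nat" where
  "tail_degree m i d =
     (\<Sum>v\<in>Poly_Mapping.keys m. if fst v = i \<and> d \<le> snd v then Poly_Mapping.lookup m v else 0)"

lemma tail_degree_superset:
  assumes "finite S" "Poly_Mapping.keys m \<subseteq> S"
  shows "tail_degree m i d = (\<Sum>v\<in>S. if fst v = i \<and> d \<le> snd v then Poly_Mapping.lookup m v else 0)"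
  unfolding tail_degree_def
  by (rule sum.mono_neutral_left[OF assms]) (auto simp: in_keys_iff)

lemma tail_degree_add: "tail_degree (m + n) i d = tail_degree m i d + tail_degree n i d"
proof -
  let ?S = "Poly_Mapping.keys m \<union> Poly_Mapping.keys n"
  let ?t = "\<lambda>p v. if fst v = i \<and> d \<le> snd v then Poly_Mapping.lookup p v else 0"
  have "tail_degree (m + n) i d = (\<Sum>v\<in>?S. ?t (m + n) v)"
    by (rule tail_degree_superset) (simp_all add: keys_add)
  also have "\<dots> = (\<Sum>v\<in>?S. ?t m v + ?t n v)"
    by (rule sum.cong) (simp_all add: lookup_add)
  also have "\<dots> = (\<Sum>v\<in>?S. ?t m v) + (\<Sum>v\<in>?S. ?t n v)"
    by (rule sum.distrib)
  also have "\<dots> = tail_degree m i d + tail_degree n i d"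
    by (simp add: tail_degree_superset[of ?S m] tail_degree_superset[of ?S n])
  finally show ?thesis .
qed

lemma tail_degree_single:
  "tail_degree (Poly_Mapping.single (i', j) n) i d = (if i' = i \<and> d \<le> j then n else 0)"
  by (cases "n = 0") (simp_all add: tail_degree_def)

lemma tail_degree_Suc:
  "tail_degree m i d = Poly_Mapping.lookup m (i, d) + tail_degree m i (Suc d)"
proof -
  let ?S = "insert (i, d) (Poly_Mapping.keys m)"
  let ?t = "\<lambda>d v. if fst v = i \<and> d \<le> snd v then Poly_Mapping.lookup m v else 0"
  have "tail_degree m i d = (\<Sum>v\<in>?S. ?t d v)"
    by (rule tail_degree_superset) auto
  also have "\<dots> = (\<Sum>v\<in>?S. (if v = (i, d) then Poly_Mapping.lookup m v else 0) + ?t (Suc d) v)"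
    by (rule sum.cong) (auto simp: le_Suc_eq)
  also have "\<dots> = Poly_Mapping.lookup m (i, d) + (\<Sum>v\<in>?S. ?t (Suc d) v)"
    by (simp add: sum.distrib)
  also have "(\<Sum>v\<in>?S. ?t (Suc d) v) = tail_degree m i (Suc d)"
    by (rule sym, rule tail_degree_superset) auto
  finally show ?thesis .
qed

lemma tail_degree_eventually_zero: "\<exists>B. \<forall>i d. B \<le> d \<longrightarrow> tail_degree m i d = 0"
proof -
  obtain B where bound: "\<And>v. v \<in> Poly_Mapping.keys m \<Longrightarrow> snd v < B"
    using finite_nat_set_iff_bounded[of "snd ` Poly_Mapping.keys m"] by auto
  have "tail_degree m i d = 0" if "B \<le> d" for i d
    unfolding tail_degree_def using that by (intro sum.neutral) (auto dest: bound)
  then show ?thesis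
    by blast
qed

lemma tail_degree_in_young_diagrams: "tail_degree m i \<in> young_diagrams"
proof -
  have "antimono (tail_degree m i)"
    unfolding antimono_iff_le_Suc
  proof
    fix d
    show "tail_degree m i (Suc d) \<le> tail_degree m i d"
      using tail_degree_Suc[of m i d] by linarith
  qed
  moreover obtain B where "\<forall>i d. B \<le> d \<longrightarrow> tail_degree m i d = 0"
    using tail_degree_eventually_zero by blast
  ultimately show ?thesis
    by (auto simp: young_diagrams_def)
qed

lemma inj_tail_degree: "inj tail_degree"
proof (rule injI)
  fix x y :: "'i \<times> nat \<Rightarrow>\<^sub>0 nat"
  assume eq: "tail_degree x = tail_degree y"
  show "x = y"
  proof (rule poly_mapping_eqI)
    fix v :: "'i \<times> nat"
    show "Poly_Mapping.lookup x v = Poly_Mapping.lookup y v"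
      using tail_degree_Suc[of x "fst v" "snd v"] tail_degree_Suc[of y "fst v" "snd v"] eq by simp
  qed
qed

lemma almost_full_on_tail_degree:
  "almost_full_on (\<lambda>m m'. tail_degree m \<le> tail_degree m') (UNIV :: ('i::finite \<times> nat \<Rightarrow>\<^sub>0 nat) set)"
proof (rule almost_full_onI)
  fix f :: "nat \<Rightarrow> 'i \<times> nat \<Rightarrow>\<^sub>0 nat"
  have "almost_full_on (\<lambda>u v. \<forall>i\<in>UNIV. u i \<le> v i)
      {u :: 'i \<Rightarrow> nat \<Rightarrow> nat. \<forall>i\<in>UNIV. u i \<in> young_diagrams}"
    by (rule almost_full_on_fun) (simp_all add: almost_full_on_young_diagrams)
  then obtain k l where "k < l" "\<forall>i\<in>UNIV. tail_degree (f k) i \<le> tail_degree (f l) i"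
    by (rule almost_full_onD[where f = "\<lambda>k. tail_degree (f k)"])
      (simp add: tail_degree_in_young_diagrams)
  then show "\<exists>k l. k < l \<and> tail_degree (f k) \<le> tail_degree (f l)"
    by (auto simp: le_fun_def)
qed

lemma tail_degree_add_single:
  "tail_degree (x + Poly_Mapping.single (i, d) n) k e =
     tail_degree x k e + (if k = i \<and> e \<le> d then n else 0)"
  by (auto simp: tail_degree_add tail_degree_single)

definition mult_shift_closed :: "('i \<times> nat \<Rightarrow>\<^sub>0 nat) set \<Rightarrow> bool" where
  "mult_shift_closed M \<longleftrightarrow>
     (\<forall>m r. m \<in> M \<longrightarrow> m + r \<in> M) \<and>
     (\<forall>a i d. a + Poly_Mapping.single (i, d) 1 \<in> M \<longrightarrow> a + Poly_Mapping.single (i, Suc d) 1 \<in> M)"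

lemma tail_degree_gap_cases:
  fixes x m :: "'i \<times> nat \<Rightarrow>\<^sub>0 nat"
  assumes "tail_degree x \<le> tail_degree m" "x \<noteq> m"
  obtains (zero) i where "tail_degree x i 0 < tail_degree m i 0"
    | (succ) i d where "tail_degree x i (Suc d) < tail_degree m i (Suc d)"
        "Poly_Mapping.lookup x (i, d) \<noteq> 0"
proof -
  have le: "tail_degree x i d \<le> tail_degree m i d" for i d
    using assms(1) by (simp add: le_fun_def)
  have "tail_degree x \<noteq> tail_degree m"
    using assms(2) inj_tail_degree by (auto dest: injD)
  then obtain i d where "tail_degree x i d \<noteq> tail_degree m i d"
    by (auto simp: fun_eq_iff)
  then have "tail_degree x i d < tail_degree m i d"
    using le by (simp add: order_less_le)
  define d0 where "d0 = (LEAST d. tail_degree x i d < tail_degree m i d)"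
  have lt: "tail_degree x i d0 < tail_degree m i d0"
    unfolding d0_def by (rule LeastI) fact
  show thesis
  proof (cases d0)
    case 0
    with lt show thesis
      by (intro zero) simp
  next
    case (Suc d')
    have "\<not> tail_degree x i d' < tail_degree m i d'"
      using not_less_Least[of d' "\<lambda>d. tail_degree x i d < tail_degree m i d"] Suc
      by (simp add: d0_def)
    then have "tail_degree x i d' = tail_degree m i d'"
      using le[of i d'] by simp
    then have "Poly_Mapping.lookup x (i, d') \<noteq> 0"
      using tail_degree_Suc[of x i d'] tail_degree_Suc[of m i d'] lt Suc by simp
    with lt Suc show thesis
      by (intro succ) simp_all
  qed
qed

lemma minus_single_add_single:
  fixes x :: "'a \<Rightarrow>\<^sub>0 nat"
  assumes "Poly_Mapping.lookup x v \<noteq> 0"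
  shows "x - Poly_Mapping.single v 1 + Poly_Mapping.single v 1 = x"
proof (rule poly_mapping_eqI)
  fix w
  show "Poly_Mapping.lookup (x - Poly_Mapping.single v 1 + Poly_Mapping.single v 1) w =
      Poly_Mapping.lookup x w"
    using assms by (cases "w = v") (auto simp: lookup_add lookup_minus lookup_single)
qed

lemma exists_tail_degree_increment:
  fixes x m :: "'i \<times> nat \<Rightarrow>\<^sub>0 nat"
  assumes M: "mult_shift_closed M" and "x \<in> M" "tail_degree x \<le> tail_degree m" "x \<noteq> m"
  obtains x' :: "'i \<times> nat \<Rightarrow>\<^sub>0 nat" and i d where "x' \<in> M" "tail_degree x i d < tail_degree m i d"
    "\<forall>k e. tail_degree x' k e = tail_degree x k e + (if k = i \<and> e = d then 1 else 0)"
  using assms(3,4)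
proof (cases rule: tail_degree_gap_cases)
  case (zero i)
  have "x + Poly_Mapping.single (i, 0) 1 \<in> M"
    using M \<open>x \<in> M\<close> by (simp add: mult_shift_closed_def)
  moreover note zero
  moreover have "\<forall>k e. tail_degree (x + Poly_Mapping.single (i, 0) 1) k e
      = tail_degree x k e + (if k = i \<and> e = 0 then 1 else 0)"
    by (simp add: tail_degree_add_single)
  ultimately show thesis
    by (rule that)
next
  case (succ i d)
  define a where "a = x - Poly_Mapping.single (i, d) 1"
  have x: "x = a + Poly_Mapping.single (i, d) 1"
    using minus_single_add_single[OF succ(2)] by (simp add: a_def)
  have "a + Poly_Mapping.single (i, Suc d) 1 \<in> M"
    using M \<open>x \<in> M\<close> by (simp add: mult_shift_closed_def x)
  moreover note succ(1)
  moreover have "\<forall>k e. tail_degree (a + Poly_Mapping.single (i, Suc d) 1) k e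
      = tail_degree x k e + (if k = i \<and> e = Suc d then 1 else 0)"
    by (simp add: x tail_degree_add_single le_Suc_eq)
  ultimately show thesis
    by (rule that)
qed

definition tail_weight :: "nat \<Rightarrow> ('i::finite \<times> nat \<Rightarrow>\<^sub>0 nat) \<Rightarrow> nat" where
  "tail_weight B x = (\<Sum>i\<in>UNIV. \<Sum>d<B. tail_degree x i d)"

lemma tail_weight_mono: "tail_degree x \<le> tail_degree y \<Longrightarrow> tail_weight B x \<le> tail_weight B y"
  unfolding tail_weight_def by (intro sum_mono) (simp add: le_fun_def)

lemma tail_weight_increment:
  assumes "\<And>k e. tail_degree x' k e = tail_degree x k e + (if k = i \<and> e = d then 1 else 0)" "d < B"
  shows "tail_weight B x' = Suc (tail_weight B x)"
proof -
  have "tail_weight B x' = tail_weight B x + (\<Sum>k\<in>UNIV. \<Sum>e<B. if k = i \<and> e = d then 1 else 0)"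
    by (simp add: tail_weight_def assms(1) sum.distrib)
  also have "(\<Sum>k\<in>UNIV. \<Sum>e<B. if k = i \<and> e = d then 1 else 0) =
      (\<Sum>k\<in>UNIV. if k = i then 1 else (0::nat))"
    using assms(2) by (intro sum.cong) auto
  finally show ?thesis
    by simp
qed

lemma tail_degree_increment_le:
  assumes "tail_degree x \<le> tail_degree m" "tail_degree x i d < tail_degree m i d"
    and "\<forall>k e. tail_degree x' k e = tail_degree x k e + (if k = i \<and> e = d then 1 else 0)"
  shows "tail_degree x' \<le> tail_degree m"
proof (intro le_funI)
  fix k e
  have "tail_degree x k e \<le> tail_degree m k e"
    using assms(1) by (simp add: le_fun_def)
  then show "tail_degree x' k e \<le> tail_degree m k e"
    using assms(2,3) by (cases "k = i \<and> e = d") auto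
qed

lemma mem_if_tail_degree_le:
  fixes M :: "('i::finite \<times> nat \<Rightarrow>\<^sub>0 nat) set"
  assumes M: "mult_shift_closed M" and "m \<in> M" "tail_degree m \<le> tail_degree m'"
  shows "m' \<in> M"
proof -
  obtain B where B: "\<forall>i d. B \<le> d \<longrightarrow> tail_degree m' i d = 0"
    using tail_degree_eventually_zero by blast
  have "x \<in> M \<Longrightarrow> tail_degree x \<le> tail_degree m' \<Longrightarrow> m' \<in> M" for x
  proof (induction x rule: measure_induct_rule[where f = "\<lambda>x. tail_weight B m' - tail_weight B x"])
    case (less x)
    show ?case
    proof (cases "x = m'")
      case True
      with less.prems show ?thesis
        by simp
    next
      case False
      with M less.prems obtain x' i d where "x' \<in> M"
        and lt: "tail_degree x i d < tail_degree m' i d"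
        and inc: "\<forall>k e. tail_degree x' k e = tail_degree x k e + (if k = i \<and> e = d then 1 else 0)"
        by (rule exists_tail_degree_increment)
      have "d < B"
      proof (rule ccontr)
        assume "\<not> d < B"
        with B have "tail_degree m' i d = 0"
          by simp
        with lt show False
          by simp
      qed
      have le': "tail_degree x' \<le> tail_degree m'"
        using less.prems(2) lt inc by (rule tail_degree_increment_le)
      have "tail_weight B x' = Suc (tail_weight B x)"
        using inc[rule_format] \<open>d < B\<close> by (rule tail_weight_increment)
      moreover have "tail_weight B x' \<le> tail_weight B m'"
        using le' by (rule tail_weight_mono)
      ultimately have "tail_weight B m' - tail_weight B x' < tail_weight B m' - tail_weight B x"
        by simp
      then show ?thesis
        using \<open>x' \<in> M\<close> le' by (rule less.IH)
    qed
  qed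
  with assms show ?thesis
    by blast
qed

section \<open>Monomials in well-mixed ideals\<close>

lemma sigma_ideal_wm_closure: "sigma_ideal s (wm_closure s F)"
  unfolding wm_closure_def sigma_ideal_def is_ideal_def by auto

lemma well_mixed_wm_closure: "well_mixed s (wm_closure s F)"
  unfolding wm_closure_def well_mixed_def by auto

lemma wm_closure_least: "sigma_ideal s J \<Longrightarrow> well_mixed s J \<Longrightarrow> F \<subseteq> J \<Longrightarrow> wm_closure s F \<subseteq> J"
  unfolding wm_closure_def by blast

lemma subset_wm_closure: "F \<subseteq> wm_closure s F"
  unfolding wm_closure_def by blast

lemma shift_mon_single:
  "shift_mon (Poly_Mapping.single (i, j) n) = Poly_Mapping.single (i, Suc j) n"
  by (cases "n = 0") (simp_all add: shift_mon_def)

lemma dsigma_monomial: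
  "s 1 = 1 \<Longrightarrow> dsigma s (Poly_Mapping.single m 1) = Poly_Mapping.single (shift_mon m) 1"
  by (simp add: dsigma_def)

lemma mult_shift_closed_monomial_exponents:
  fixes J :: "('i, 'k::field) dpoly set"
  assumes "is_ideal J" "well_mixed s J" "s 1 = 1"
  shows "mult_shift_closed {m. Poly_Mapping.single m 1 \<in> J}"
  unfolding mult_shift_closed_def
proof (intro conjI allI impI; simp only: mem_Collect_eq)
  fix m r :: "'i \<times> nat \<Rightarrow>\<^sub>0 nat"
  assume "Poly_Mapping.single m 1 \<in> J"
  then have "Poly_Mapping.single r 1 * Poly_Mapping.single m (1::'k) \<in> J"
    using assms(1) by (simp add: is_ideal_def)
  then show "Poly_Mapping.single (m + r) (1::'k) \<in> J"
    by (simp add: mult_single add.commute)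
next
  fix a i d
  assume "Poly_Mapping.single (a + Poly_Mapping.single (i, d) 1) (1::'k) \<in> J"
  then have "Poly_Mapping.single a 1 * Poly_Mapping.single (Poly_Mapping.single (i, d) 1) (1::'k)
      \<in> J"
    by (simp add: mult_single)
  then have
    "Poly_Mapping.single a 1 * dsigma s (Poly_Mapping.single (Poly_Mapping.single (i, d) 1) 1) \<in> J"
    using assms(2) by (simp add: well_mixed_def)
  then show "Poly_Mapping.single (a + Poly_Mapping.single (i, Suc d) 1) (1::'k) \<in> J"
    by (simp add: dsigma_monomial[of s, OF assms(3)] shift_mon_single mult_single)
qed

lemma monomial_mem_if_tail_degree_le:
  fixes J :: "('i::finite, 'k::field) dpoly set"
  assumes "is_ideal J" "well_mixed s J" "s 1 = 1"
    and "Poly_Mapping.single m 1 \<in> J" "tail_degree m \<le> tail_degree m'"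
  shows "Poly_Mapping.single m' 1 \<in> J"
  using mem_if_tail_degree_le[OF mult_shift_closed_monomial_exponents[OF assms(1-3)]] assms(4,5)
  by simp

lemma exists_monomial_generator_not_mem:
  assumes "G \<subseteq> {p. is_monomial p}" "sigma_ideal s J" "well_mixed s J" "\<not> wm_closure s G \<subseteq> J"
  shows "\<exists>m. Poly_Mapping.single m 1 \<in> G \<and> Poly_Mapping.single m 1 \<notin> J"
proof (rule ccontr)
  assume "\<not> ?thesis"
  with assms(1) have "G \<subseteq> J"
    by (force simp: is_monomial_def)
  with assms(2,3) have "wm_closure s G \<subseteq> J"
    by (rule wm_closure_least)
  with assms(4) show False
    by blast
qed

theorem corollary4p11:
  fixes s :: "'k::field_char_0 \<Rightarrow> 'k"
    and I :: "nat \<Rightarrow> ('i::finite, 'k) dpoly set"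
    and F :: "nat \<Rightarrow> ('i, 'k) dpoly set"
  assumes "ring_endo s"
    and "\<And>j. F j \<subseteq> {p. is_monomial p}"
    and "\<And>j. I j = wm_closure s (F j)"
  shows "\<not> (\<forall>j. I j \<subset> I (Suc j))"
proof
  assume chain: "\<forall>j. I j \<subset> I (Suc j)"
  have s1: "s 1 = 1"
    using assms(1) by (simp add: ring_endo_def)
  have sigma: "sigma_ideal s (I j)" and wm: "well_mixed s (I j)" for j
    using sigma_ideal_wm_closure[of s "F j"] well_mixed_wm_closure[of s "F j"]
    by (simp_all add: assms(3))
  have "\<exists>m. Poly_Mapping.single m 1 \<in> F (Suc j) \<and> Poly_Mapping.single m 1 \<notin> I j" for j
    using assms(2) sigma wm chain by (intro exists_monomial_generator_not_mem) (auto simp: assms(3))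
  then obtain m where new: "\<And>j. Poly_Mapping.single (m j) 1 \<in> F (Suc j)"
    "\<And>j. Poly_Mapping.single (m j) 1 \<notin> I j"
    by metis
  obtain i j where "i < j" and le: "tail_degree (m i) \<le> tail_degree (m j)"
    using almost_full_onD[OF almost_full_on_tail_degree] by blast
  have "I (Suc i) \<subseteq> I j"
    using lift_Suc_mono_le[of I] chain \<open>i < j\<close> by (simp add: less_eq_Suc_le order_less_imp_le)
  moreover have "Poly_Mapping.single (m i) 1 \<in> I (Suc i)"
    using new(1) subset_wm_closure assms(3) by blast
  ultimately have "Poly_Mapping.single (m j) 1 \<in> I j"
    using monomial_mem_if_tail_degree_le[OF _ wm s1 _ le] sigma by (auto simp: sigma_ideal_def)
  with new(2) show False
    by blast
qed

end
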